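(* Let $(X,d)$ be a complete metric space with $|X|\geqslant 3$, and let $T\colon X\to X$ satisfy: (i) $T$ has no periodic points of prime period $2$, i.e. $T(T(x))\neq x$ for every $x\in X$ with $Tx\neq x$; (ii) $T$ is a generalized Ćirić–Reich–Rus type mapping on $X$, i.e. there exist $\alpha,\lambda\geqslant 0$ with $2\alpha+\frac{3\lambda}{2}<1$ such that $$d(Tx,Ty)+d(Ty,Tz)+d(Tx,Tz)\leqslant \alpha\big(d(x,y)+d(y,z)+d(z,x)\big)+\lambda\big(d(x,Tx)+d(y,Ty)+d(z,Tz)\big)$$ for all pairwise distinct $x,y,z\in X$. Then $T$ has a fixed point, and $T$ has at most two fixed points. *)

theory Defs
  imports "HOL-Analysis.Analysis"
begin

definition gen_ciric_reich_rus :: "('a::metric_space \<Rightarrow> 'a) \<Rightarrow> bool" where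
  "gen_ciric_reich_rus T \<longleftrightarrow>
     (\<exists>a l::real. a \<ge> 0 \<and> l \<ge> 0 \<and> 2 * a + 3 * l / 2 < 1 \<and>
        (\<forall>x y z. x \<noteq> y \<and> y \<noteq> z \<and> x \<noteq> z \<longrightarrow>
           dist (T x) (T y) + dist (T y) (T z) + dist (T x) (T z)
             \<le> a * (dist x y + dist y z + dist z x)
               + l * (dist x (T x) + dist y (T y) + dist z (T z))))"

end

theory Submission
  imports Defs
begin

(* If T had no fixed point, then for every x the points x, T x, T (T x) would be pairwise
   distinct (there are no 2-cycles), and the three-point inequality applied to them shows that
   the perimeter of the triangle (x, T x, T (T x)) shrinks under T by the factor
   (a + l) / (1 - l / 2) < 1. So every orbit is Cauchy, and injective because the perimeters
   strictly decrease. Applying the inequality to the limit xi and two consecutive orbit points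
   and letting n tend to infinity gives 2 d(xi, T xi) <= l d(xi, T xi) with l < 2, so xi is
   fixed after all. Three distinct fixed points are impossible since a < 1. *)

lemma finite_card_le_2_if_no_three_distinct:
  assumes "\<nexists>x y z. x \<in> S \<and> y \<in> S \<and> z \<in> S \<and> x \<noteq> y \<and> y \<noteq> z \<and> x \<noteq> z"
  shows "finite S \<and> card S \<le> 2"
proof (rule ccontr)
  assume "\<not> (finite S \<and> card S \<le> 2)"
  then obtain A where "A \<subseteq> S" "card A = 3"
    by (metis infinite_arbitrarily_large not_less_eq_eq numeral_2_eq_2 numeral_3_eq_3
        obtain_subset_with_card_n)
  then show False
    using assms by (auto simp: card_3_iff)
qed

lemma dist_le_geometric_tail:
  fixes s :: "nat \<Rightarrow> 'a::metric_space"
  assumes "q < 1" and step: "\<And>n. dist (s n) (s (Suc n)) \<le> C * q ^ n"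
  shows "dist (s m) (s (m + k)) \<le> C * q ^ m / (1 - q)"
proof (induction k arbitrary: m)
  case 0
  have "0 \<le> C * q ^ m"
    using step[of m] zero_le_dist order_trans by blast
  then show ?case
    using \<open>q < 1\<close> by simp
next
  case (Suc k)
  have "dist (s m) (s (m + Suc k)) \<le> dist (s m) (s (Suc m)) + dist (s (Suc m)) (s (Suc m + k))"
    using dist_triangle by simp
  also have "\<dots> \<le> C * q ^ m + C * q ^ Suc m / (1 - q)"
    using step Suc.IH by (rule add_mono)
  also have "\<dots> = C * q ^ m / (1 - q)"
    using \<open>q < 1\<close> by (simp add: field_simps)
  finally show ?case .
qed

lemma Cauchy_if_dist_Suc_le_geometric:
  fixes s :: "nat \<Rightarrow> 'a::metric_space"
  assumes "0 \<le> q" "q < 1" and step: "\<And>n. dist (s n) (s (Suc n)) \<le> C * q ^ n"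
  shows "Cauchy s"
proof (rule CauchyI')
  fix e :: real
  assume "0 < e"
  have "(\<lambda>m. C * q ^ m / (1 - q)) \<longlonglongrightarrow> C * 0 / (1 - q)"
    using assms(1,2) by (intro tendsto_divide tendsto_mult tendsto_const LIMSEQ_power_zero) simp_all
  then have "\<forall>\<^sub>F m in sequentially. C * q ^ m / (1 - q) < e"
    using \<open>0 < e\<close> by (simp add: order_tendstoD(2))
  then obtain M where M: "\<And>m. m \<ge> M \<Longrightarrow> C * q ^ m / (1 - q) < e"
    unfolding eventually_sequentially by blast
  have "dist (s m) (s n) < e" if "m \<ge> M" "n > m" for m n
    using dist_le_geometric_tail[OF \<open>q < 1\<close> step, of m "n - m"] M[OF \<open>m \<ge> M\<close>] \<open>n > m\<close>
    by simp
  then show "\<exists>M. \<forall>m\<ge>M. \<forall>n>m. dist (s m) (s n) < e"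
    by blast
qed

locale ciric_reich_rus =
  fixes T :: "'a::metric_space \<Rightarrow> 'a" and a l :: real
  assumes a_nonneg: "0 \<le> a" and l_nonneg: "0 \<le> l" and coeffs_small: "2 * a + 3 * l / 2 < 1"
    and three_point_ineq: "\<And>x y z. x \<noteq> y \<Longrightarrow> y \<noteq> z \<Longrightarrow> x \<noteq> z \<Longrightarrow>
      dist (T x) (T y) + dist (T y) (T z) + dist (T x) (T z)
        \<le> a * (dist x y + dist y z + dist z x) + l * (dist x (T x) + dist y (T y) + dist z (T z))"

lemma gen_ciric_reich_rus_iff: "gen_ciric_reich_rus T \<longleftrightarrow> (\<exists>a l. ciric_reich_rus T a l)"
  by (simp add: gen_ciric_reich_rus_def ciric_reich_rus_def imp_conjL)

context ciric_reich_rus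
begin

abbreviation orbit :: "'a \<Rightarrow> nat \<Rightarrow> 'a" where
  "orbit x n \<equiv> (T ^^ n) x"

definition perimeter :: "'a \<Rightarrow> real" where
  "perimeter x = dist x (T x) + dist (T x) (T (T x)) + dist x (T (T x))"

definition ratio :: real where
  "ratio = (a + l) / (1 - l / 2)"

lemma ratio_nonneg: "0 \<le> ratio"
  using a_nonneg l_nonneg coeffs_small by (simp add: ratio_def)

lemma ratio_less_1: "ratio < 1"
  using a_nonneg l_nonneg coeffs_small by (simp add: ratio_def field_simps)

lemma finite_fixed_points_card_le_2: "finite {x. T x = x} \<and> card {x. T x = x} \<le> 2"
proof (rule finite_card_le_2_if_no_three_distinct, safe)
  fix x y z
  assume fixed: "T x = x" "T y = y" "T z = z" and distinct: "x \<noteq> y" "y \<noteq> z" "x \<noteq> z"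
  have "dist x y + dist y z + dist x z \<le> a * (dist x y + dist y z + dist x z)"
    using three_point_ineq[OF distinct] by (simp add: fixed dist_commute)
  moreover have "0 < dist x y + dist y z + dist x z"
    using distinct by (simp add: add_pos_nonneg)
  ultimately show False
    using a_nonneg l_nonneg coeffs_small by (simp add: mult_le_cancel_right2)
qed

lemma perimeter_pos: "T x \<noteq> x \<Longrightarrow> 0 < perimeter x"
  by (simp add: perimeter_def add_pos_nonneg dist_commute)

lemma perimeter_T_le:
  assumes "x \<noteq> T x" "T x \<noteq> T (T x)" "x \<noteq> T (T x)"
  shows "perimeter (T x) \<le> ratio * perimeter x"
proof -
  have ineq: "perimeter (T x) \<le> a * perimeter x
      + l * (dist x (T x) + dist (T x) (T (T x))) + l * dist (T (T x)) (T (T (T x)))"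
    using three_point_ineq[OF assms] by (simp add: perimeter_def dist_commute algebra_simps)
  have "l * (dist x (T x) + dist (T x) (T (T x))) \<le> l * perimeter x"
    using l_nonneg by (intro mult_left_mono) (auto simp: perimeter_def)
  moreover have "l * (2 * dist (T (T x)) (T (T (T x)))) \<le> l * perimeter (T x)"
    using l_nonneg dist_triangle[of "T (T x)" "T (T (T x))" "T x"]
    by (intro mult_left_mono) (auto simp: perimeter_def dist_commute)
  ultimately have "(1 - l / 2) * perimeter (T x) \<le> (a + l) * perimeter x"
    using ineq by (simp add: algebra_simps)
  moreover have "0 < 1 - l / 2"
    using a_nonneg coeffs_small by simp
  ultimately show ?thesis
    by (simp add: ratio_def field_simps)
qed

lemma limit_of_injective_orbit_is_fixed:
  assumes inj: "inj (orbit x)" and lim: "orbit x \<longlonglongrightarrow> \<xi>"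
  shows "T \<xi> = \<xi>"
proof (rule ccontr)
  assume "T \<xi> \<noteq> \<xi>"
  let ?s = "orbit x"
  have "finite (?s -` {\<xi>})"
    using inj by (intro finite_vimageI) auto
  then have "\<forall>\<^sub>F n in sequentially. ?s n \<noteq> \<xi>"
    by (simp add: cofinite_eq_sequentially[symmetric] eventually_cofinite vimage_def)
  then have "\<forall>\<^sub>F n in sequentially. ?s n \<noteq> \<xi> \<and> ?s (Suc n) \<noteq> \<xi>"
    unfolding eventually_sequentially by (metis le_Suc_eq)
  then have ineq: "\<forall>\<^sub>F n in sequentially.
      dist (T \<xi>) (?s (Suc n)) + dist (?s (Suc n)) (?s (Suc (Suc n)))
        + dist (T \<xi>) (?s (Suc (Suc n)))
      \<le> a * (dist \<xi> (?s n) + dist (?s n) (?s (Suc n)) + dist (?s (Suc n)) \<xi>)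
        + l * (dist \<xi> (T \<xi>) + dist (?s n) (?s (Suc n)) + dist (?s (Suc n)) (?s (Suc (Suc n))))"
  proof (rule eventually_mono)
    fix n
    assume "?s n \<noteq> \<xi> \<and> ?s (Suc n) \<noteq> \<xi>"
    moreover have "?s n \<noteq> ?s (Suc n)"
      using injD[OF inj, of n "Suc n"] by auto
    ultimately have "\<xi> \<noteq> ?s n" "?s n \<noteq> ?s (Suc n)" "\<xi> \<noteq> ?s (Suc n)"
      by auto
    from three_point_ineq[OF this]
    show "dist (T \<xi>) (?s (Suc n)) + dist (?s (Suc n)) (?s (Suc (Suc n)))
        + dist (T \<xi>) (?s (Suc (Suc n)))
      \<le> a * (dist \<xi> (?s n) + dist (?s n) (?s (Suc n)) + dist (?s (Suc n)) \<xi>)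
        + l * (dist \<xi> (T \<xi>) + dist (?s n) (?s (Suc n)) + dist (?s (Suc n)) (?s (Suc (Suc n))))"
      by simp
  qed
  have lim1: "(\<lambda>n. ?s (Suc n)) \<longlonglongrightarrow> \<xi>"
    using lim by (rule LIMSEQ_Suc)
  then have lim2: "(\<lambda>n. ?s (Suc (Suc n))) \<longlonglongrightarrow> \<xi>"
    by (rule LIMSEQ_Suc)
  have upper: "(\<lambda>n. a * (dist \<xi> (?s n) + dist (?s n) (?s (Suc n)) + dist (?s (Suc n)) \<xi>)
        + l * (dist \<xi> (T \<xi>) + dist (?s n) (?s (Suc n)) + dist (?s (Suc n)) (?s (Suc (Suc n)))))
      \<longlonglongrightarrow> a * (dist \<xi> \<xi> + dist \<xi> \<xi> + dist \<xi> \<xi>)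
        + l * (dist \<xi> (T \<xi>) + dist \<xi> \<xi> + dist \<xi> \<xi>)"
    by (intro tendsto_add tendsto_mult tendsto_dist tendsto_const lim lim1 lim2)
  have lower: "(\<lambda>n. dist (T \<xi>) (?s (Suc n)) + dist (?s (Suc n)) (?s (Suc (Suc n)))
        + dist (T \<xi>) (?s (Suc (Suc n))))
      \<longlonglongrightarrow> dist (T \<xi>) \<xi> + dist \<xi> \<xi> + dist (T \<xi>) \<xi>"
    by (intro tendsto_add tendsto_dist tendsto_const lim1 lim2)
  from ineq have "dist (T \<xi>) \<xi> + dist \<xi> \<xi> + dist (T \<xi>) \<xi>
      \<le> a * (dist \<xi> \<xi> + dist \<xi> \<xi> + dist \<xi> \<xi>)
        + l * (dist \<xi> (T \<xi>) + dist \<xi> \<xi> + dist \<xi> \<xi>)"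
    by (rule tendsto_le[OF trivial_limit_sequentially upper lower])
  then have "2 * dist \<xi> (T \<xi>) \<le> l * dist \<xi> (T \<xi>)"
    by (simp add: dist_commute)
  moreover have "l < 2"
    using a_nonneg coeffs_small by simp
  ultimately show False
    using \<open>T \<xi> \<noteq> \<xi>\<close> by (simp add: mult_le_cancel_right)
qed

context
  assumes fixed_point_free: "\<And>x. T x \<noteq> x" and no_period_2: "\<And>x. T (T x) \<noteq> x"
begin

lemma perimeter_contracts: "perimeter (T x) \<le> ratio * perimeter x"
  using fixed_point_free no_period_2 by (intro perimeter_T_le) metis+

lemma perimeter_T_less: "perimeter (T x) < perimeter x"
proof -
  have "perimeter (T x) \<le> ratio * perimeter x"
    by (rule perimeter_contracts)
  also have "\<dots> < perimeter x"
    using ratio_less_1 perimeter_pos[OF fixed_point_free] by simp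
  finally show ?thesis .
qed

lemma inj_orbit: "inj (orbit x)"
proof (rule linorder_injI)
  fix m n :: nat
  assume "m < n"
  then have "perimeter (orbit x n) < perimeter (orbit x m)"
    using lift_Suc_mono_less[of "\<lambda>k. - perimeter (orbit x k)"] perimeter_T_less by simp
  then show "orbit x m \<noteq> orbit x n"
    by auto
qed

lemma dist_orbit_Suc_le: "dist (orbit x n) (orbit x (Suc n)) \<le> perimeter x * ratio ^ n"
proof -
  have "dist (orbit x n) (orbit x (Suc n)) \<le> perimeter (orbit x n)"
    by (simp add: perimeter_def)
  also have "\<dots> \<le> perimeter x * ratio ^ n"
  proof (induction n)
    case 0
    then show ?case by simp
  next
    case (Suc n)
    have "perimeter (orbit x (Suc n)) \<le> ratio * perimeter (orbit x n)"
      by (simp add: perimeter_contracts)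
    also have "\<dots> \<le> perimeter x * ratio ^ Suc n"
      using mult_left_mono[OF Suc.IH ratio_nonneg] by (simp add: ac_simps)
    finally show ?case .
  qed
  finally show ?thesis .
qed

lemma Cauchy_orbit: "Cauchy (orbit x)"
proof (rule Cauchy_if_dist_Suc_le_geometric)
  show "dist (orbit x n) (orbit x (Suc n)) \<le> perimeter x * ratio ^ n" for n
    by (rule dist_orbit_Suc_le)
qed (simp_all add: ratio_nonneg ratio_less_1)

end

lemma fixed_point_exists:
  assumes "complete (UNIV :: 'a set)" and no_period_2: "\<And>x. T x \<noteq> x \<Longrightarrow> T (T x) \<noteq> x"
  shows "\<exists>x. T x = x"
proof (rule ccontr)
  assume "\<nexists>x. T x = x"
  then have fixed_point_free: "\<And>x. T x \<noteq> x" and no_2_cycle: "\<And>x. T (T x) \<noteq> x"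
    using no_period_2 by blast+
  fix x0 :: 'a
  obtain \<xi> where "orbit x0 \<longlonglongrightarrow> \<xi>"
    using \<open>complete UNIV\<close> Cauchy_orbit[OF fixed_point_free no_2_cycle] by (blast elim: completeE)
  then have "T \<xi> = \<xi>"
    by (rule limit_of_injective_orbit_is_fixed[OF inj_orbit[OF fixed_point_free no_2_cycle]])
  then show False
    using fixed_point_free by blast
qed

end

theorem theorem3p1:
  fixes T :: "'a::{metric_space, complete_space} \<Rightarrow> 'a"
  assumes three: "\<exists>a b c::'a. a \<noteq> b \<and> b \<noteq> c \<and> a \<noteq> c"
    and no_per2: "\<And>x. T x \<noteq> x \<Longrightarrow> T (T x) \<noteq> x"
    and crr: "gen_ciric_reich_rus T"
  shows "(\<exists>x. T x = x) \<and> finite {x. T x = x} \<and> card {x. T x = x} \<le> 2"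
proof -
  obtain a l where "ciric_reich_rus T a l"
    using crr gen_ciric_reich_rus_iff by blast
  then interpret ciric_reich_rus T a l .
  show ?thesis
    using fixed_point_exists[OF complete_UNIV no_per2] finite_fixed_points_card_le_2
    by (rule conjI)
qed

end
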